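(* Let $a>0$ and let $Z=f(p\partial_{\xi}+q\partial_{\mu})$ be a zonal flow on $M^{3}_{a}$ which is not identically zero, with $p,q\in\mathbb{R}$ not both zero and $f$ a smooth function. Then $Z$ is an $S^{1}$-zonal flow if and only if $p=0$ or $q/p\in\mathbb{Q}$.
   Context: $M^{3}_{a}:=\{(x,y,z,w)\in\mathbb{R}^{4}:x^{2}+y^{2}=a^{2}(1-z^{2}-w^{2})\}$ with the metric induced from $\mathbb{R}^{4}$; $\partial_{\xi}:=-y\partial_{x}+x\partial_{y}$, $\partial_{\mu}:=-w\partial_{z}+z\partial_{w}$ restricted to $M^{3}_{a}$ (both Killing). Let $\nabla$ be the Levi-Civita connection. A vector field $X$ is Killing if $g(\nabla_{V}X,W)=-g(\nabla_{W}X,V)$ for all $V,W$. A smooth vector field $Z$ is a zonal flow if (1) $Z=fX$ with $f$ smooth and $X$ Killing; (2) $\operatorname{div}Z=0$; (3) $\nabla_{Z}Z=-\operatorname{grad}p$ for some smooth function $p$. $Z$ is an $S^{1}$-zonal flow if (in a representation $Z=fX$ as in (1)) $X$ is the infinitesimal generator of a smooth action of the circle group $S^{1}$ on the manifold. *)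

theory Defs
  imports "HOL-Analysis.Analysis"
begin

type_synonym R4 = "real \<times> real \<times> real \<times> real"

fun Ck_on :: "nat \<Rightarrow> 'a::euclidean_space set \<Rightarrow> ('a \<Rightarrow> 'b::real_normed_vector) \<Rightarrow> bool" where
  "Ck_on 0 U g = continuous_on U g"
| "Ck_on (Suc k) U g =
     (continuous_on U g \<and> (\<forall>x\<in>U. g differentiable (at x)) \<and>
      (\<forall>b\<in>Basis. Ck_on k U (\<lambda>x. frechet_derivative g (at x) b)))"

definition smooth_on :: "'a::euclidean_space set \<Rightarrow> ('a \<Rightarrow> 'b::real_normed_vector) \<Rightarrow> bool" where
  "smooth_on U g \<longleftrightarrow> (\<forall>k. Ck_on k U g)"

definition M :: "real \<Rightarrow> R4 set" where
  "M a = {(x,y,z,w). x\<^sup>2 + y\<^sup>2 = a\<^sup>2 * (1 - z\<^sup>2 - w\<^sup>2)}"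

text \<open>Normal vector (gradient of the defining function) and tangent space.\<close>
definition normal :: "real \<Rightarrow> R4 \<Rightarrow> R4" where
  "normal a v = (case v of (x,y,z,w) \<Rightarrow> (x, y, a\<^sup>2 * z, a\<^sup>2 * w))"

definition tangent :: "real \<Rightarrow> R4 \<Rightarrow> R4 set" where
  "tangent a v = {u. u \<bullet> normal a v = 0}"

definition proj :: "real \<Rightarrow> R4 \<Rightarrow> R4 \<Rightarrow> R4" where
  "proj a v u = u - ((u \<bullet> normal a v) / (normal a v \<bullet> normal a v)) *\<^sub>R normal a v"

definition smooth_ext :: "real \<Rightarrow> (R4 \<Rightarrow> 'b::real_normed_vector) \<Rightarrow> (R4 \<Rightarrow> 'b) \<Rightarrow> bool" where
  "smooth_ext a f g \<longleftrightarrow>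
     (\<exists>U. open U \<and> M a \<subseteq> U \<and> smooth_on U g \<and> (\<forall>v\<in>M a. g v = f v))"

definition smooth_fun :: "real \<Rightarrow> (R4 \<Rightarrow> 'b::real_normed_vector) \<Rightarrow> bool" where
  "smooth_fun a f \<longleftrightarrow> (\<exists>g. smooth_ext a f g)"

definition ext :: "real \<Rightarrow> (R4 \<Rightarrow> 'b::real_normed_vector) \<Rightarrow> (R4 \<Rightarrow> 'b)" where
  "ext a f = (SOME g. smooth_ext a f g)"

text \<open>Derivative at v in M along a vector u (independent of the extension for tangent u).\<close>
definition dderiv :: "real \<Rightarrow> (R4 \<Rightarrow> 'b::real_normed_vector) \<Rightarrow> R4 \<Rightarrow> R4 \<Rightarrow> 'b" where
  "dderiv a f v u = frechet_derivative (ext a f) (at v) u"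

definition vector_field :: "real \<Rightarrow> (R4 \<Rightarrow> R4) \<Rightarrow> bool" where
  "vector_field a X \<longleftrightarrow> smooth_fun a X \<and> (\<forall>v\<in>M a. X v \<in> tangent a v)"

text \<open>Levi-Civita connection of the induced metric: tangential part of the ambient derivative.\<close>
definition nabla :: "real \<Rightarrow> (R4 \<Rightarrow> R4) \<Rightarrow> (R4 \<Rightarrow> R4) \<Rightarrow> R4 \<Rightarrow> R4" where
  "nabla a V X v = proj a v (dderiv a X v (V v))"

definition killing :: "real \<Rightarrow> (R4 \<Rightarrow> R4) \<Rightarrow> bool" where
  "killing a X \<longleftrightarrow> vector_field a X \<and>
     (\<forall>V W. vector_field a V \<and> vector_field a W \<longrightarrow>
        (\<forall>v\<in>M a. nabla a V X v \<bullet> W v = - (nabla a W X v \<bullet> V v)))"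

text \<open>Divergence = trace of (u \<mapsto> nabla_u X) on the tangent space
  (= trace over R^4 of P o DX o P, P the tangential projection).\<close>
definition divergence :: "real \<Rightarrow> (R4 \<Rightarrow> R4) \<Rightarrow> R4 \<Rightarrow> real" where
  "divergence a X v = (\<Sum>b\<in>Basis. dderiv a X v (proj a v b) \<bullet> proj a v b)"

definition grad :: "real \<Rightarrow> (R4 \<Rightarrow> real) \<Rightarrow> R4 \<Rightarrow> R4" where
  "grad a P v = proj a v (\<Sum>b\<in>Basis. dderiv a P v b *\<^sub>R b)"

definition dxi :: "R4 \<Rightarrow> R4" where
  "dxi v = (case v of (x,y,z,w) \<Rightarrow> (-y, x, 0, 0))"

definition dmu :: "R4 \<Rightarrow> R4" where
  "dmu v = (case v of (x,y,z,w) \<Rightarrow> (0, 0, -w, z))"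

definition zonal_flow :: "real \<Rightarrow> (R4 \<Rightarrow> R4) \<Rightarrow> bool" where
  "zonal_flow a Z \<longleftrightarrow> vector_field a Z \<and>
     (\<exists>f X. smooth_fun a f \<and> killing a X \<and> (\<forall>v\<in>M a. Z v = f v *\<^sub>R X v)) \<and>
     (\<forall>v\<in>M a. divergence a Z v = 0) \<and>
     (\<exists>P. smooth_fun a P \<and> (\<forall>v\<in>M a. nabla a Z Z v = - grad a P v))"

text \<open>X generates a smooth action of S^1 = R/TZ (T > 0) on M.\<close>
definition S1_generator :: "real \<Rightarrow> (R4 \<Rightarrow> R4) \<Rightarrow> bool" where
  "S1_generator a X \<longleftrightarrow>
     (\<exists>\<Phi> :: real \<Rightarrow> R4 \<Rightarrow> R4. \<exists>T>0.
        (\<exists>U. open U \<and> UNIV \<times> M a \<subseteq> U \<and> smooth_on U (\<lambda>(t,v). \<Phi> t v)) \<and>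
        (\<forall>t. \<forall>v\<in>M a. \<Phi> t v \<in> M a) \<and>
        (\<forall>v\<in>M a. \<Phi> 0 v = v) \<and>
        (\<forall>s t. \<forall>v\<in>M a. \<Phi> (s + t) v = \<Phi> s (\<Phi> t v)) \<and>
        (\<forall>v\<in>M a. \<Phi> T v = v) \<and>
        (\<forall>v\<in>M a. ((\<lambda>t. \<Phi> t v) has_vector_derivative X v) (at 0)))"

definition S1_zonal_flow :: "real \<Rightarrow> (R4 \<Rightarrow> R4) \<Rightarrow> bool" where
  "S1_zonal_flow a Z \<longleftrightarrow> zonal_flow a Z \<and>
     (\<exists>f X. smooth_fun a f \<and> killing a X \<and> (\<forall>v\<in>M a. Z v = f v *\<^sub>R X v) \<and> S1_generator a X)"

end

theory Submission
  imports Defs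
begin

text \<open>The field \<open>J = p \<partial>\<^sub>\<xi> + q \<partial>\<^sub>\<mu>\<close> is linear and skew-symmetric, hence Killing,
  and its flow rotates the \<open>(x,y)\<close>- and \<open>(z,w)\<close>-planes by the angles \<open>p t\<close> and \<open>q t\<close>;
  this flow is periodic when \<open>q/p\<close> is rational.

  Conversely, \<open>div (f J) = J f\<close>, so f is invariant under the flow of J. If \<open>f J = f' X\<close> with X
  generating a circle action, pick a point \<open>v\<^sub>0\<close> where \<open>f \<noteq> 0\<close> and neither planar component
  vanishes. Along the closed X-orbit of \<open>v\<^sub>0\<close> the field X equals \<open>h J\<close> with h continuous and
  nonzero, so in the new time \<open>\<sigma> = \<integral> h\<close> the orbit is a J-orbit that returns to \<open>v\<^sub>0\<close> after
  time \<open>\<sigma>(T) \<noteq> 0\<close>. Both \<open>p \<sigma>(T)\<close> and \<open>q \<sigma>(T)\<close> then lie in \<open>2\<pi>\<int>\<close>.\<close>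

lemma has_vector_derivative_compose_differentiable:
  assumes "(\<gamma> has_vector_derivative u) (at t)" and "G differentiable at (\<gamma> t)"
  shows "((\<lambda>s. G (\<gamma> s)) has_vector_derivative frechet_derivative G (at (\<gamma> t)) u) (at t)"
proof -
  have "(G has_derivative frechet_derivative G (at (\<gamma> t))) (at (\<gamma> t) within range \<gamma>)"
    using assms(2) frechet_derivative_works has_derivative_at_withinI by blast
  from vector_derivative_diff_chain_within[OF _ this] assms(1) show ?thesis
    by (simp add: o_def)
qed

lemma has_vector_derivative_fst:
  "(f has_vector_derivative f') F \<Longrightarrow> ((\<lambda>t. fst (f t)) has_vector_derivative fst f') F"
  by (rule bounded_linear.has_vector_derivative[OF bounded_linear_fst])

lemma has_vector_derivative_snd:
  "(f has_vector_derivative f') F \<Longrightarrow> ((\<lambda>t. snd (f t)) has_vector_derivative snd f') F"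
  by (rule bounded_linear.has_vector_derivative[OF bounded_linear_snd])

lemma flow_orbit_has_vector_derivative:
  fixes \<Phi> :: "real \<Rightarrow> 'a \<Rightarrow> 'a::real_normed_vector"
  assumes flow: "\<forall>s t. \<forall>v\<in>S. \<Phi> (s + t) v = \<Phi> s (\<Phi> t v)" and invariant: "\<forall>t. \<forall>v\<in>S. \<Phi> t v \<in> S"
    and generator: "\<forall>v\<in>S. ((\<lambda>t. \<Phi> t v) has_vector_derivative X v) (at 0)" and v: "v \<in> S"
  shows "((\<lambda>s. \<Phi> s v) has_vector_derivative X (\<Phi> t v)) (at t)"
proof -
  have "((\<lambda>s. s - t) has_vector_derivative 1) (at t)"
    by (auto intro!: derivative_eq_intros simp flip: has_real_derivative_iff_has_vector_derivative)
  moreover have "((\<lambda>s. \<Phi> s (\<Phi> t v)) has_vector_derivative X (\<Phi> t v)) (at (t - t))"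
    using generator invariant v by simp
  ultimately have "((\<lambda>s. \<Phi> s (\<Phi> t v)) \<circ> (\<lambda>s. s - t) has_vector_derivative 1 *\<^sub>R X (\<Phi> t v)) (at t)"
    by (rule vector_diff_chain_at)
  moreover have "\<Phi> (s - t) (\<Phi> t v) = \<Phi> s v" for s
    using flow v by (metis diff_add_cancel)
  ultimately show ?thesis by (simp add: o_def)
qed

text \<open>On an interval where g does not vanish, g is constant; so g cannot reach its first zero.\<close>
lemma DERIV_zero_where_nonzero_imp_const:
  fixes g d :: "real \<Rightarrow> real"
  assumes g0: "g 0 \<noteq> 0" and g': "\<And>t. (g has_real_derivative d t) (at t)"
    and d: "\<And>t. g t \<noteq> 0 \<Longrightarrow> d t = 0" and "s \<ge> 0"
  shows "g s = g 0"
proof -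
  have cont: "continuous_on A g" for A
    using g' by (intro continuous_at_imp_continuous_on ballI DERIV_isCont) blast
  have const: "g t = g 0" if "t > 0" "\<forall>x\<in>{0<..<t}. g x \<noteq> 0" for t
  proof (rule DERIV_isconst_end[OF that(1) cont])
    fix x assume "0 < x" "x < t"
    then show "(g has_real_derivative 0) (at x)"
      using that(2) g'[of x] d[of x] by simp
  qed
  have "g t \<noteq> 0" if "t \<in> {0..s}" for t
  proof
    assume "g t = 0"
    define Z where "Z = {t \<in> {0..s}. g t = 0}"
    have "closed Z"
      unfolding Z_def by (rule continuous_closed_preimage_constant[OF cont]) simp
    moreover have "Z \<noteq> {}" "bdd_below Z"
      using \<open>g t = 0\<close> that by (auto simp: Z_def intro!: bdd_belowI[of _ 0])
    ultimately
    have "Inf Z \<in> Z" and first: "\<And>x. x \<in> Z \<Longrightarrow> Inf Z \<le> x"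
      by (auto intro: closed_contains_Inf cInf_lower)
    then have Inf: "0 \<le> Inf Z" "Inf Z \<le> s" "g (Inf Z) = 0"
      by (simp_all add: Z_def)
    with g0 have "Inf Z > 0"
      by (metis order_le_less)
    moreover have "g x \<noteq> 0" if "0 < x" "x < Inf Z" for x
    proof
      assume "g x = 0"
      with that Inf have "x \<in> Z" by (simp add: Z_def)
      with first that show False by fastforce
    qed
    ultimately show False
      using const[of "Inf Z"] Inf g0 by simp
  qed
  then show ?thesis
    using const[of s] \<open>s \<ge> 0\<close> by (cases "s = 0") auto
qed

lemma eventually_rotation_nonzero:
  fixes P Q :: "'a::real_normed_vector"
  assumes "P \<noteq> 0 \<or> Q \<noteq> 0"
  shows "eventually (\<lambda>e. cos e *\<^sub>R P - sin e *\<^sub>R Q \<noteq> 0) (at 0)"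
proof (cases "P = 0")
  case True
  then have "Q \<noteq> 0" using assms by simp
  have "sin e \<noteq> 0" if "e \<noteq> 0" "\<bar>e\<bar> < pi" for e :: real
    using sin_eq_0_pi[of e] that by (auto simp: abs_less_iff)
  then have "eventually (\<lambda>e::real. sin e \<noteq> 0) (at 0)"
    unfolding eventually_at by (intro exI[of _ pi]) (auto simp: dist_real_def)
  then show ?thesis
    using True \<open>Q \<noteq> 0\<close> by (auto elim: eventually_mono)
next
  case False
  have "((\<lambda>e::real. cos e *\<^sub>R P - sin e *\<^sub>R Q) \<longlongrightarrow> P) (at 0)"
    by (rule tendsto_eq_intros refl | simp)+
  then show ?thesis
    using False by (rule tendsto_imp_eventually_ne)
qed

lemma rotation_sum_squares:
  fixes \<alpha> x y :: real
  shows "(cos \<alpha> * x - sin \<alpha> * y)^2 + (sin \<alpha> * x + cos \<alpha> * y)^2 = x^2 + y^2"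
proof -
  have "(cos \<alpha> * x - sin \<alpha> * y)^2 + (sin \<alpha> * x + cos \<alpha> * y)^2
      = ((sin \<alpha>)^2 + (cos \<alpha>)^2) * (x^2 + y^2)"
    by algebra
  then show ?thesis by simp
qed

text \<open>Rotating \<open>(x t, y t)\<close> back by the angle \<open>r \<sigma> t\<close> gives a constant vector.\<close>
lemma planar_rotation_closed_orbit:
  fixes x y h \<sigma> :: "real \<Rightarrow> real"
  assumes "T > 0"
    and x': "\<And>t. t \<in> {0<..<T} \<Longrightarrow> (x has_real_derivative h t * (- r * y t)) (at t)"
    and y': "\<And>t. t \<in> {0<..<T} \<Longrightarrow> (y has_real_derivative h t * (r * x t)) (at t)"
    and \<sigma>': "\<And>t. t \<in> {0<..<T} \<Longrightarrow> (\<sigma> has_real_derivative h t) (at t)"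
    and cont: "continuous_on {0..T} x" "continuous_on {0..T} y" "continuous_on {0..T} \<sigma>"
    and "\<sigma> 0 = 0" and closed: "x T = x 0" "y T = y 0" and "x 0 \<noteq> 0 \<or> y 0 \<noteq> 0"
  shows "cos (r * \<sigma> T) = 1"
proof -
  define A where "A t = x t * cos (r * \<sigma> t) + y t * sin (r * \<sigma> t)" for t
  define B where "B t = - x t * sin (r * \<sigma> t) + y t * cos (r * \<sigma> t)" for t
  have "A T = A 0"
  proof (rule DERIV_isconst_end[OF \<open>T > 0\<close>])
    show "continuous_on {0..T} A"
      unfolding A_def using cont by (intro continuous_intros)
    show "(A has_real_derivative 0) (at t)" if "0 < t" "t < T" for t
      unfolding A_def[abs_def] using x' y' \<sigma>' that
      by (auto intro!: derivative_eq_intros simp: algebra_simps)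
  qed
  moreover have "B T = B 0"
  proof (rule DERIV_isconst_end[OF \<open>T > 0\<close>])
    show "continuous_on {0..T} B"
      unfolding B_def using cont by (intro continuous_intros)
    show "(B has_real_derivative 0) (at t)" if "0 < t" "t < T" for t
      unfolding B_def[abs_def] using x' y' \<sigma>' that
      by (auto intro!: derivative_eq_intros simp: algebra_simps)
  qed
  ultimately have "x 0 * (cos (r * \<sigma> T) - 1) + y 0 * sin (r * \<sigma> T) = 0"
    "- x 0 * sin (r * \<sigma> T) + y 0 * (cos (r * \<sigma> T) - 1) = 0"
    using closed \<open>\<sigma> 0 = 0\<close> by (simp_all add: A_def B_def algebra_simps)
  then have "(cos (r * \<sigma> T) - 1) * ((x 0)^2 + (y 0)^2) = 0"
    by algebra
  then show ?thesis
    using \<open>x 0 \<noteq> 0 \<or> y 0 \<noteq> 0\<close> by auto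
qed

lemma rational_ratio_if_cos_eq_one:
  fixes p q s :: real
  assumes "p \<noteq> 0" "s \<noteq> 0" "cos (p * s) = 1" "cos (q * s) = 1"
  shows "q / p \<in> \<rat>"
proof -
  obtain k m :: int where k: "p * s = of_int k * 2 * pi" and m: "q * s = of_int m * 2 * pi"
    using assms cos_one_2pi_int by metis
  have "q / p = (q * s) / (p * s)"
    using assms by simp
  also have "\<dots> = of_int m / of_int k"
    unfolding k m by simp
  finally show ?thesis by simp
qed

section \<open>The hypersurface M and its tangential projection\<close>

lemma mem_M_iff: "(x,y,z,w) \<in> M a \<longleftrightarrow> x^2 + y^2 = a^2 * (1 - z^2 - w^2)"
  by (simp add: M_def)

lemma mem_M_iff_sum_squares: "(x,y,z,w) \<in> M a \<longleftrightarrow> x^2 + y^2 + a^2 * (z^2 + w^2) = a^2"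
  by (auto simp: M_def algebra_simps)

lemma normal_simp: "normal a (x,y,z,w) = (x, y, a^2*z, a^2*w)"
  by (simp add: normal_def)

lemma linear_normal: "linear (normal a)"
  by (rule linearI) (auto simp: normal_def split: prod.splits simp: algebra_simps)

lemma inner_normal_commute: "normal a v \<bullet> u = v \<bullet> normal a u"
  by (cases v; cases u) (simp add: normal_simp algebra_simps)

lemma inner_normal_self_nonneg: "u \<bullet> normal a u \<ge> 0"
  by (cases u) (simp add: normal_simp power2_eq_square[symmetric] mult.left_commute[of _ "a^2"])

lemma mem_M_iff_inner_normal: "v \<in> M a \<longleftrightarrow> v \<bullet> normal a v = a^2"
  by (cases v) (auto simp: mem_M_iff normal_simp power2_eq_square algebra_simps)

lemma normal_nonzero: "a > 0 \<Longrightarrow> v \<in> M a \<Longrightarrow> normal a v \<noteq> 0"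
  by (auto simp: mem_M_iff_inner_normal)

lemma proj_tangent: "a > 0 \<Longrightarrow> v \<in> M a \<Longrightarrow> proj a v u \<in> tangent a v"
  using normal_nonzero[of a v] by (simp add: proj_def tangent_def inner_diff_left)

lemma proj_tangent_id: "w \<in> tangent a v \<Longrightarrow> proj a v w = w"
  by (simp add: proj_def tangent_def)

lemma inner_proj_tangent: "w \<in> tangent a v \<Longrightarrow> proj a v u \<bullet> w = u \<bullet> w"
  by (simp add: proj_def tangent_def inner_diff_left inner_commute[of w])

lemma linear_proj: "linear (proj a v)"
  by (rule linearI) (simp_all add: proj_def inner_add_left algebra_simps add_divide_distrib)

text \<open>The curve \<open>s \<mapsto> lam s *\<^sub>R (v + s *\<^sub>R u)\<close> runs in M through v with velocity u, because
  M is a level set of the quadratic form \<open>v \<bullet> normal a v\<close> and u is orthogonal to \<open>normal a v\<close>.\<close>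
lemma frechet_derivative_tangent_cong:
  assumes a: "a > 0" and v: "v \<in> M a" and u: "u \<in> tangent a v"
    and G1: "G1 differentiable at v" and G2: "G2 differentiable at v"
    and eq: "\<forall>w\<in>M a. G1 w = G2 w"
  shows "frechet_derivative G1 (at v) u = frechet_derivative G2 (at v) u"
proof -
  define Qu where "Qu = u \<bullet> normal a u"
  define lam where "lam s = a / sqrt (a^2 + s^2 * Qu)" for s
  define \<gamma> where "\<gamma> s = lam s *\<^sub>R (v + s *\<^sub>R u)" for s
  have pos: "a^2 + s^2 * Qu > 0" for s
    using a inner_normal_self_nonneg[of u a] by (simp add: Qu_def add_pos_nonneg)
  have vu: "v \<bullet> normal a u = 0" and uv: "u \<bullet> normal a v = 0"
    using u inner_normal_commute[of a v u] by (simp_all add: tangent_def inner_commute)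
  have "\<gamma> s \<bullet> normal a (\<gamma> s) = a^2" for s
  proof -
    have "\<gamma> s \<bullet> normal a (\<gamma> s) = (lam s)^2 * (a^2 + s^2 * Qu)"
      using v unfolding \<gamma>_def Qu_def mem_M_iff_inner_normal
      by (simp add: linear_add[OF linear_normal] linear_scale[OF linear_normal] inner_add_left
          inner_add_right vu uv power2_eq_square algebra_simps)
    also have "\<dots> = a^2"
      using pos[of s] by (simp add: lam_def power_divide)
    finally show ?thesis .
  qed
  then have \<gamma>M: "\<gamma> s \<in> M a" for s
    by (simp add: mem_M_iff_inner_normal)
  have \<gamma>0: "\<gamma> 0 = v"
    using a by (simp add: \<gamma>_def lam_def)
  have "(lam has_real_derivative 0) (at 0)"
    unfolding lam_def[abs_def] using a by (auto intro!: derivative_eq_intros)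
  then have "(\<gamma> has_vector_derivative (lam 0 *\<^sub>R u + 0 *\<^sub>R (v + 0 *\<^sub>R u))) (at 0)"
    unfolding \<gamma>_def[abs_def] by (auto intro!: derivative_eq_intros)
  then have \<gamma>': "(\<gamma> has_vector_derivative u) (at 0)"
    using a by (simp add: lam_def)
  have "(\<lambda>s. G1 (\<gamma> s)) = (\<lambda>s. G2 (\<gamma> s))"
    using eq \<gamma>M by auto
  then show ?thesis
    using has_vector_derivative_compose_differentiable[OF \<gamma>', of G1]
      has_vector_derivative_compose_differentiable[OF \<gamma>', of G2] G1 G2 \<gamma>0
    by (metis vector_derivative_unique_at)
qed

lemma Ck_on_affine:
  fixes L :: "'a::euclidean_space \<Rightarrow> 'b::real_normed_vector"
  assumes "linear L"
  shows "Ck_on k U (\<lambda>v. L v + c)"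
  using assms
proof (induction k arbitrary: L c)
  case 0
  then show ?case
    by (simp add: continuous_on_add[OF linear_continuous_on continuous_on_const]
        linear_conv_bounded_linear)
next
  case (Suc k)
  have hd: "((\<lambda>v. L v + c) has_derivative L) (at x)" for x
    using has_derivative_add_const[OF linear_imp_has_derivative[OF Suc.prems]] .
  have "Ck_on k U (\<lambda>x. frechet_derivative (\<lambda>v. L v + c) (at x) b)" for b
    using Suc.IH[of "\<lambda>_. 0" "L b"] linear_zero
    by (simp add: frechet_derivative_at[OF hd, symmetric])
  moreover have "continuous_on U (\<lambda>v. L v + c)"
    using Suc.prems
    by (simp add: continuous_on_add[OF linear_continuous_on continuous_on_const]
        linear_conv_bounded_linear)
  ultimately show ?case
    using hd by (auto simp: differentiable_def)
qed

lemma smooth_on_linear: "linear L \<Longrightarrow> smooth_on U L"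
  using Ck_on_affine[of L _ U 0] by (simp add: smooth_on_def)

lemma smooth_on_imp_differentiable: "smooth_on U g \<Longrightarrow> x \<in> U \<Longrightarrow> g differentiable (at x)"
  unfolding smooth_on_def by (metis Ck_on.simps(2))

lemma smooth_fun_ext:
  assumes "smooth_fun a f"
  shows "\<exists>U. open U \<and> M a \<subseteq> U \<and> smooth_on U (ext a f) \<and> (\<forall>v\<in>M a. ext a f v = f v)"
proof -
  have "smooth_ext a f (ext a f)"
    using assms unfolding smooth_fun_def ext_def by (rule someI_ex)
  then show ?thesis by (simp add: smooth_ext_def)
qed

lemma ext_eq: "smooth_fun a f \<Longrightarrow> v \<in> M a \<Longrightarrow> ext a f v = f v"
  using smooth_fun_ext by blast

lemma ext_differentiable: "smooth_fun a f \<Longrightarrow> v \<in> M a \<Longrightarrow> ext a f differentiable (at v)"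
  using smooth_fun_ext smooth_on_imp_differentiable by blast

lemma isCont_ext: "smooth_fun a f \<Longrightarrow> v \<in> M a \<Longrightarrow> isCont (ext a f) v"
  using ext_differentiable differentiable_imp_continuous_within by blast

lemma smooth_fun_linear: "linear L \<Longrightarrow> smooth_fun a L"
  unfolding smooth_fun_def smooth_ext_def by (blast intro: smooth_on_linear)

lemma dderiv_linear:
  assumes "a > 0" "v \<in> M a" "u \<in> tangent a v" "linear L"
  shows "dderiv a L v u = L u"
proof -
  have L: "(L has_derivative L) (at v)"
    using assms(4) by (rule linear_imp_has_derivative)
  have "frechet_derivative (ext a L) (at v) u = frechet_derivative L (at v) u"
    using assms ext_eq[of a L] ext_differentiable[of a L v] smooth_fun_linear[OF assms(4)] L
    by (intro frechet_derivative_tangent_cong) (auto simp: differentiable_def)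
  also have "\<dots> = L u"
    using frechet_derivative_at[OF L] by simp
  finally show ?thesis by (simp add: dderiv_def)
qed

section \<open>The Killing field J and its flow\<close>

definition J :: "real \<Rightarrow> real \<Rightarrow> R4 \<Rightarrow> R4" where
  "J p q v = p *\<^sub>R dxi v + q *\<^sub>R dmu v"

lemma J_simp: "J p q (x,y,z,w) = (-p*y, p*x, -q*w, q*z)"
  by (simp add: J_def dxi_def dmu_def)

lemma J_components:
  "fst (J p q v) = - p * fst (snd v)" "fst (snd (J p q v)) = p * fst v"
  "fst (snd (snd (J p q v))) = - q * snd (snd (snd v))"
  "snd (snd (snd (J p q v))) = q * fst (snd (snd v))"
  by (cases v; simp add: J_simp)+

lemma linear_J: "linear (J p q)"
  by (rule linearI) (auto simp: J_def dxi_def dmu_def split: prod.splits simp: algebra_simps)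

lemma inner_J_skew: "J p q u \<bullet> w = - (J p q w \<bullet> u)"
  by (cases u; cases w) (simp add: J_simp algebra_simps)

lemma inner_J_self: "J p q u \<bullet> u = 0"
  using inner_J_skew[of p q u u] by simp

lemma J_tangent: "J p q v \<in> tangent a v"
  by (cases v) (simp add: J_simp tangent_def normal_simp algebra_simps)

lemma J_nonzero:
  assumes "a > 0" "p \<noteq> 0" "q \<noteq> 0" "v \<in> M a"
  shows "J p q v \<noteq> 0"
  using assms by (cases v) (auto simp: J_simp mem_M_iff zero_prod_def)

lemma killing_J:
  assumes a: "a > 0"
  shows "killing a (J p q)"
proof -
  have "nabla a V (J p q) v \<bullet> W v = J p q (V v) \<bullet> W v"
    if "vector_field a V" "vector_field a W" "v \<in> M a" for V W v
    using that a
    by (simp add: nabla_def vector_field_def inner_proj_tangent dderiv_linear[OF a _ _ linear_J])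
  then show ?thesis
    using smooth_fun_linear[OF linear_J] J_tangent
    by (auto simp: killing_def vector_field_def intro: inner_J_skew)
qed

text \<open>The flow of \<open>J p q\<close>, written with projections rather than a tuple pattern so that
  \<open>derivative_eq_intros\<close> applies to it.\<close>
definition rot :: "real \<Rightarrow> real \<Rightarrow> real \<Rightarrow> R4 \<Rightarrow> R4" where
  "rot p q t v =
     (cos (p*t) * fst v - sin (p*t) * fst (snd v), sin (p*t) * fst v + cos (p*t) * fst (snd v),
      cos (q*t) * fst (snd (snd v)) - sin (q*t) * snd (snd (snd v)),
      sin (q*t) * fst (snd (snd v)) + cos (q*t) * snd (snd (snd v)))"

lemma rot_simp:
  "rot p q t (x,y,z,w) =
     (cos (p*t) * x - sin (p*t) * y, sin (p*t) * x + cos (p*t) * y,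
      cos (q*t) * z - sin (q*t) * w, sin (q*t) * z + cos (q*t) * w)"
  by (simp add: rot_def)

lemma linear_rot: "linear (rot p q t)"
proof (rule linearI)
  show "rot p q t (u + w) = rot p q t u + rot p q t w" for u w
    by (cases u; cases w) (simp add: rot_simp algebra_simps)
  show "rot p q t (c *\<^sub>R u) = c *\<^sub>R rot p q t u" for c u
    by (cases u) (simp add: rot_simp algebra_simps)
qed

lemma rot_zero: "rot p q 0 v = v"
  by (cases v) (simp add: rot_simp)

lemma rot_add: "rot p q (s + t) v = rot p q s (rot p q t v)"
proof -
  have "cos (\<alpha> + \<beta>) * x - sin (\<alpha> + \<beta>) * y
      = cos \<alpha> * (cos \<beta> * x - sin \<beta> * y) - sin \<alpha> * (sin \<beta> * x + cos \<beta> * y)"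
    "sin (\<alpha> + \<beta>) * x + cos (\<alpha> + \<beta>) * y
      = sin \<alpha> * (cos \<beta> * x - sin \<beta> * y) + cos \<alpha> * (sin \<beta> * x + cos \<beta> * y)"
    for \<alpha> \<beta> x y :: real
    by (simp_all add: cos_add sin_add algebra_simps)
  then show ?thesis
    by (cases v) (simp only: rot_simp distrib_left)
qed

lemma rot_in_M:
  assumes "v \<in> M a"
  shows "rot p q t v \<in> M a"
  using assms by (cases v) (simp add: rot_simp mem_M_iff_sum_squares rotation_sum_squares)

lemma has_derivative_rot:
  "((\<lambda>x. rot p q (fst x) (snd x)) has_derivative
     (\<lambda>d. fst d *\<^sub>R rot p q (fst x) (J p q (snd x)) + rot p q (fst x) (snd d))) (at x)"
  unfolding rot_def
  by (rule has_derivative_eq_rhs, (rule derivative_eq_intros refl)+)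
    (cases x, auto simp: fun_eq_iff J_def dxi_def dmu_def split: prod.splits, simp_all add: algebra_simps)

lemma has_derivative_rot_affine:
  fixes L :: "R4 \<Rightarrow> R4"
  assumes "linear L"
  shows "((\<lambda>x. rot p q (fst x) (L (snd x) + c)) has_derivative
     (\<lambda>d. fst d *\<^sub>R rot p q (fst x) (J p q (L (snd x) + c)) + rot p q (fst x) (L (snd d)))) (at x)"
proof -
  have "((\<lambda>x. (fst x, L (snd x) + c)) has_derivative (\<lambda>d. (fst d, L (snd d)))) (at x)"
    using assms
    by (intro has_derivative_Pair has_derivative_fst has_derivative_add_const
        has_derivative_compose[OF has_derivative_snd] linear_imp_has_derivative)
      (auto simp: linear_iff)
  from diff_chain_at[OF this has_derivative_rot] show ?thesis
    by (simp add: o_def)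
qed

text \<open>The class of maps \<open>(t,v) \<mapsto> rot t (L v + c)\<close> is closed under directional derivatives,
  since \<open>rot t\<close> commutes with J.\<close>
lemma Ck_on_rot_affine:
  fixes L :: "R4 \<Rightarrow> R4" and U :: "(real \<times> R4) set"
  assumes "linear L"
  shows "Ck_on k U (\<lambda>x. rot p q (fst x) (L (snd x) + c))"
  using assms
proof (induction k arbitrary: L c)
  case 0
  show ?case
    by (simp add: continuous_at_imp_continuous_on has_derivative_continuous[OF has_derivative_rot_affine[OF 0]])
next
  case (Suc k)
  note D = has_derivative_rot_affine[OF Suc.prems]
  have "Ck_on k U (\<lambda>x. frechet_derivative (\<lambda>x. rot p q (fst x) (L (snd x) + c)) (at x) b)" for b
  proof -
    define L' where "L' v = fst b *\<^sub>R J p q (L v)" for v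
    define c' where "c' = fst b *\<^sub>R J p q c + L (snd b)"
    have L': "linear L'"
      unfolding L'_def using linear_compose[OF Suc.prems linear_J]
      by (auto simp: linear_iff scaleR_add_right)
    have "frechet_derivative (\<lambda>x. rot p q (fst x) (L (snd x) + c)) (at x) b
        = rot p q (fst x) (L' (snd x) + c')" for x
      unfolding frechet_derivative_at[OF D[where x = x], symmetric] L'_def c'_def
      by (simp add: linear_add[OF linear_rot] linear_scale[OF linear_rot]
          linear_add[OF linear_J] algebra_simps)
    then show ?thesis
      using Suc.IH[OF L', of c'] by simp
  qed
  moreover have "continuous_on U (\<lambda>x. rot p q (fst x) (L (snd x) + c))"
    by (simp add: continuous_at_imp_continuous_on has_derivative_continuous[OF D])
  moreover have "\<forall>x\<in>U. (\<lambda>x. rot p q (fst x) (L (snd x) + c)) differentiable (at x)"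
    unfolding differentiable_def using D by blast
  ultimately show ?case
    by simp
qed

lemma smooth_on_rot: "smooth_on U (\<lambda>(t, v). rot p q t v)"
  unfolding smooth_on_def case_prod_unfold using Ck_on_rot_affine[OF linear_id, where c = 0]
  by simp

lemma rot_has_vector_derivative: "((\<lambda>t. rot p q t v) has_vector_derivative J p q v) (at 0)"
proof -
  have "((\<lambda>t::real. (t, v)) has_derivative (\<lambda>h. (h, 0))) (at 0)"
    by (auto intro!: derivative_eq_intros)
  from diff_chain_at[OF this has_derivative_rot] show ?thesis
    by (simp add: o_def rot_zero has_vector_derivative_def)
qed

lemma rot_period:
  assumes "p * T / (2 * pi) \<in> \<int>" and "q * T / (2 * pi) \<in> \<int>"
  shows "rot p q T v = v"
proof -
  from assms obtain k m where "p * T / (2 * pi) = of_int k" "q * T / (2 * pi) = of_int m"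
    by (metis Ints_cases)
  then have "p * T = 2 * pi * of_int k" "q * T = 2 * pi * of_int m"
    by (simp_all add: field_simps)
  then show ?thesis
    by (cases v) (simp add: rot_simp cos_int_2pin sin_int_2pin)
qed

lemma common_period_if_rational_ratio:
  fixes p q :: real
  assumes "p \<noteq> 0 \<or> q \<noteq> 0" and "p = 0 \<or> q / p \<in> \<rat>"
  obtains T where "T > 0" "p * T / (2 * pi) \<in> \<int>" "q * T / (2 * pi) \<in> \<int>"
proof (cases "p = 0")
  case True
  with assms have "q \<noteq> 0" by simp
  have "q * (2 * pi / \<bar>q\<bar>) / (2 * pi) = sgn q"
    using \<open>q \<noteq> 0\<close> by (simp add: sgn_if)
  then show ?thesis
    using that[of "2 * pi / \<bar>q\<bar>"] True \<open>q \<noteq> 0\<close> by (simp add: sgn_if)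
next
  case False
  with assms obtain m n :: int where n: "n > 0" and mn: "q / p = of_int m / of_int n"
    by (metis Rats_cases')
  define T where "T = 2 * pi * of_int n / \<bar>p\<bar>"
  have pT: "p * T / (2 * pi) = of_int n * sgn p"
    using False by (simp add: T_def sgn_if)
  have "q * T / (2 * pi) = (q / p) * (p * T / (2 * pi))"
    using False by simp
  also have "\<dots> = of_int m * sgn p"
    unfolding mn pT using n by simp
  finally show ?thesis
    using that[of T] pT False n by (simp add: T_def sgn_if)
qed

lemma S1_generator_J:
  assumes "p \<noteq> 0 \<or> q \<noteq> 0" and "p = 0 \<or> q / p \<in> \<rat>"
  shows "S1_generator a (J p q)"
proof -
  obtain T where "T > 0" "p * T / (2 * pi) \<in> \<int>" "q * T / (2 * pi) \<in> \<int>"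
    using common_period_if_rational_ratio[OF assms] .
  then show ?thesis
    unfolding S1_generator_def
    using smooth_on_rot rot_in_M rot_zero rot_add rot_period rot_has_vector_derivative
    by (auto intro!: exI[of _ "rot p q"] exI[of _ T] exI[of _ UNIV])
qed

section \<open>Divergence of a multiple of J\<close>

lemma divergence_scaleR_J:
  assumes a: "a > 0" and f: "smooth_fun a f" and Z: "smooth_fun a Z"
    and Z_eq: "\<forall>w\<in>M a. Z w = f w *\<^sub>R J p q w" and v: "v \<in> M a"
  shows "divergence a Z v = frechet_derivative (ext a f) (at v) (J p q v)"
proof -
  define Df where "Df = frechet_derivative (ext a f) (at v)"
  have hf: "(ext a f has_derivative Df) (at v)"
    using ext_differentiable[OF f v] frechet_derivative_works Df_def by blast
  have hG: "((\<lambda>w. ext a f w *\<^sub>R J p q w) has_derivative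
      (\<lambda>h. ext a f v *\<^sub>R J p q h + Df h *\<^sub>R J p q v)) (at v)"
    by (rule has_derivative_scaleR[OF hf linear_imp_has_derivative[OF linear_J]])
  have dZ: "dderiv a Z v u = Df u *\<^sub>R J p q v + f v *\<^sub>R J p q u" if u: "u \<in> tangent a v" for u
  proof -
    have "dderiv a Z v u = frechet_derivative (\<lambda>w. ext a f w *\<^sub>R J p q w) (at v) u"
      unfolding dderiv_def
      by (rule frechet_derivative_tangent_cong[OF a v u ext_differentiable[OF Z v]])
        (use hG in \<open>auto simp: differentiable_def ext_eq[OF Z] ext_eq[OF f] Z_eq\<close>)
    also have "\<dots> = f v *\<^sub>R J p q u + Df u *\<^sub>R J p q v"
      using ext_eq[OF f v] by (simp add: frechet_derivative_at[OF hG, symmetric])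
    finally show ?thesis by simp
  qed
  have "divergence a Z v = (\<Sum>b\<in>Basis. Df ((b \<bullet> J p q v) *\<^sub>R proj a v b))"
    unfolding divergence_def
  proof (rule sum.cong[OF refl])
    fix b :: R4
    have "J p q v \<bullet> proj a v b = b \<bullet> J p q v"
      using inner_proj_tangent[OF J_tangent] by (simp add: inner_commute)
    then show "dderiv a Z v (proj a v b) \<bullet> proj a v b = Df ((b \<bullet> J p q v) *\<^sub>R proj a v b)"
      using dZ[OF proj_tangent[OF a v]] has_derivative_linear[OF hf]
      by (simp add: inner_add_left inner_J_self linear_scale)
  qed
  also have "\<dots> = Df (proj a v (\<Sum>b\<in>Basis. (b \<bullet> J p q v) *\<^sub>R b))"
    using has_derivative_linear[OF hf] linear_proj
    by (simp add: linear_sum linear_scale)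
  also have "\<dots> = Df (J p q v)"
    using euclidean_representation[of "J p q v"] proj_tangent_id[OF J_tangent]
    by (simp add: inner_commute)
  finally show ?thesis by (simp add: Df_def)
qed

section \<open>The converse direction\<close>

text \<open>The curve c rotates the \<open>(x,y)\<close>-plane into the \<open>(z,w)\<close>-plane inside M; for small
  \<open>e \<noteq> 0\<close> the point \<open>c e\<close> lies on neither plane \<open>x = y = 0\<close> nor \<open>z = w = 0\<close>, and f
  stays nonzero by continuity.\<close>
lemma smooth_fun_nonzero_off_axes:
  assumes a: "a > 0" and f: "smooth_fun a f" and v: "v \<in> M a" and fv: "f v \<noteq> 0"
  obtains x y z w where "(x,y,z,w) \<in> M a" "f (x,y,z,w) \<noteq> 0" "(x,y) \<noteq> 0" "(z,w) \<noteq> 0"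
proof -
  obtain x y z w where v_eq: "v = (x,y,z,w)" by (cases v)
  define c where "c e = (cos e * x - sin e * (a*z), cos e * y - sin e * (a*w),
                          cos e * z - sin e * (-x/a), cos e * w - sin e * (-y/a))" for e
  have cM: "c e \<in> M a" for e
  proof -
    have "(cos e * x - sin e * (a*z))^2 + (cos e * y - sin e * (a*w))^2
          + a^2 * ((cos e * z - sin e * (-x/a))^2 + (cos e * w - sin e * (-y/a))^2)
        = ((sin e)^2 + (cos e)^2) * (x^2 + y^2 + a^2 * (z^2 + w^2))"
      using a by (simp add: field_simps del: sin_cos_squared_add) (use sin_cos_squared_add[of e] in algebra)
    then show ?thesis
      using v by (simp add: c_def v_eq mem_M_iff_sum_squares)
  qed
  have c0: "c 0 = v"
    by (simp add: c_def v_eq)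
  have "isCont c 0"
    unfolding c_def by (intro continuous_intros)
  then have "isCont (\<lambda>e. ext a f (c e)) 0"
    using isCont_ext[OF f v] c0 isCont_o2 by metis
  then have ev_f: "eventually (\<lambda>e. ext a f (c e) \<noteq> 0) (at 0)"
    using ext_eq[OF f v] fv c0 by (intro tendsto_imp_eventually_ne) (auto simp: isCont_def)
  have xyzw: "(x,y) \<noteq> 0 \<or> (z,w) \<noteq> 0"
    using v a by (auto simp: v_eq mem_M_iff_sum_squares zero_prod_def)
  have "(x,y) \<noteq> 0 \<or> (a*z, a*w) \<noteq> 0" "(z,w) \<noteq> 0 \<or> (-x/a, -y/a) \<noteq> 0"
    using xyzw a by (auto simp: zero_prod_def)
  then have "eventually (\<lambda>e. cos e *\<^sub>R (x,y) - sin e *\<^sub>R (a*z, a*w) \<noteq> 0) (at 0)"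
    and "eventually (\<lambda>e. cos e *\<^sub>R (z,w) - sin e *\<^sub>R (-x/a, -y/a) \<noteq> 0) (at 0)"
    by (simp_all only: eventually_rotation_nonzero)
  with ev_f have "eventually (\<lambda>e. ext a f (c e) \<noteq> 0
      \<and> cos e *\<^sub>R (x,y) - sin e *\<^sub>R (a*z, a*w) \<noteq> 0
      \<and> cos e *\<^sub>R (z,w) - sin e *\<^sub>R (-x/a, -y/a) \<noteq> 0) (at 0)"
    by (intro eventually_conj)
  then obtain e where "ext a f (c e) \<noteq> 0"
      "cos e *\<^sub>R (x,y) - sin e *\<^sub>R (a*z, a*w) \<noteq> 0"
      "cos e *\<^sub>R (z,w) - sin e *\<^sub>R (-x/a, -y/a) \<noteq> 0"
    using eventually_happens'[OF at_neq_bot] by blast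
  then show ?thesis
    using that cM[of e] ext_eq[OF f cM[of e]] by (simp add: c_def)
qed

text \<open>Along the orbit of v0 the function f is constant, because its derivative along
  \<open>X = (f / f') J\<close> vanishes wherever f does not; hence X is a nonvanishing multiple of J there.\<close>
lemma S1_orbit_reparametrises_J:
  fixes f f' :: "R4 \<Rightarrow> real" and X :: "R4 \<Rightarrow> R4"
  assumes a: "a > 0" and pq: "p \<noteq> 0" "q \<noteq> 0"
    and f: "smooth_fun a f" and f': "smooth_fun a f'"
    and Jf: "\<forall>w\<in>M a. frechet_derivative (ext a f) (at w) (J p q w) = 0"
    and eq: "\<forall>w\<in>M a. f w *\<^sub>R J p q w = f' w *\<^sub>R X w"
    and X: "S1_generator a X"
    and v0: "v0 \<in> M a" "f v0 \<noteq> 0"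
  obtains \<gamma> T h where "T > 0" "\<gamma> 0 = v0" "\<gamma> T = v0"
    "\<And>t. t \<in> {0..T} \<Longrightarrow> (\<gamma> has_vector_derivative h t *\<^sub>R J p q (\<gamma> t)) (at t)"
    "continuous_on {0..T} h" "\<And>t. t \<in> {0..T} \<Longrightarrow> h t \<noteq> 0"
proof -
  obtain \<Phi> :: "real \<Rightarrow> R4 \<Rightarrow> R4" and T where "T > 0"
    and invariant: "\<forall>t. \<forall>v\<in>M a. \<Phi> t v \<in> M a" and \<Phi>0: "\<forall>v\<in>M a. \<Phi> 0 v = v"
    and flow: "\<forall>s t. \<forall>v\<in>M a. \<Phi> (s + t) v = \<Phi> s (\<Phi> t v)" and \<Phi>T: "\<forall>v\<in>M a. \<Phi> T v = v"
    and generator: "\<forall>v\<in>M a. ((\<lambda>t. \<Phi> t v) has_vector_derivative X v) (at 0)"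
    using X unfolding S1_generator_def by blast
  define \<gamma> where "\<gamma> t = \<Phi> t v0" for t
  have \<gamma>M: "\<gamma> t \<in> M a" for t
    using invariant v0 by (simp add: \<gamma>_def)
  have \<gamma>0: "\<gamma> 0 = v0" and \<gamma>T: "\<gamma> T = v0"
    using \<Phi>0 \<Phi>T v0 by (simp_all add: \<gamma>_def)
  have \<gamma>': "(\<gamma> has_vector_derivative X (\<gamma> t)) (at t)" for t
    unfolding \<gamma>_def[abs_def] using flow invariant generator v0(1)
    by (rule flow_orbit_has_vector_derivative)
  have X_eq: "f' w \<noteq> 0 \<and> X w = (f w / f' w) *\<^sub>R J p q w" if "w \<in> M a" "f w \<noteq> 0" for w
  proof -
    have fX: "f' w *\<^sub>R X w = f w *\<^sub>R J p q w"
      using eq that(1) by simp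
    then have "f' w \<noteq> 0"
      using J_nonzero[OF a pq that(1)] that(2) by auto
    then show ?thesis
      using arg_cong[OF fX, of "\<lambda>u. (1 / f' w) *\<^sub>R u"] by simp
  qed
  have f_const: "f (\<gamma> t) = f v0" if "t \<ge> 0" for t
  proof -
    let ?Df = "\<lambda>t. frechet_derivative (ext a f) (at (\<gamma> t))"
    have g': "((\<lambda>t. ext a f (\<gamma> t)) has_real_derivative ?Df t (X (\<gamma> t))) (at t)" for t
      unfolding has_real_derivative_iff_has_vector_derivative
      by (rule has_vector_derivative_compose_differentiable[OF \<gamma>' ext_differentiable[OF f \<gamma>M]])
    have d: "?Df t (X (\<gamma> t)) = 0" if "ext a f (\<gamma> t) \<noteq> 0" for t
    proof -
      have "linear (?Df t)"
        using ext_differentiable[OF f \<gamma>M] frechet_derivative_works has_derivative_linear by blast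
      then show ?thesis
        using X_eq[OF \<gamma>M] that Jf \<gamma>M ext_eq[OF f \<gamma>M] by (simp add: linear_scale)
    qed
    have "ext a f (\<gamma> t) = ext a f (\<gamma> 0)"
      by (rule DERIV_zero_where_nonzero_imp_const[OF _ g' d that]) (simp add: \<gamma>0 ext_eq[OF f v0(1)] v0(2))
    then show ?thesis
      by (simp add: ext_eq[OF f \<gamma>M] ext_eq[OF f v0(1)] \<gamma>0)
  qed
  define h where "h t = f v0 / f' (\<gamma> t)" for t
  have hJ: "f' (\<gamma> t) \<noteq> 0 \<and> X (\<gamma> t) = h t *\<^sub>R J p q (\<gamma> t)" if "t \<ge> 0" for t
    using X_eq[OF \<gamma>M] f_const[OF that] v0 by (simp add: h_def)
  have "isCont (\<lambda>t. ext a f' (\<gamma> t)) t" for t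
    using has_vector_derivative_continuous[OF \<gamma>'] isCont_ext[OF f' \<gamma>M] by (rule isCont_o2)
  then have "continuous_on {0..T} (\<lambda>t. f' (\<gamma> t))"
    using ext_eq[OF f' \<gamma>M] by (simp add: continuous_at_imp_continuous_on)
  then have "continuous_on {0..T} h"
    unfolding h_def using hJ by (intro continuous_intros) auto
  moreover have "h t \<noteq> 0" if "t \<ge> 0" for t
    using hJ[OF that] v0(2) by (simp add: h_def)
  moreover have "(\<gamma> has_vector_derivative h t *\<^sub>R J p q (\<gamma> t)) (at t)" if "t \<ge> 0" for t
    using \<gamma>'[of t] hJ[OF that] by simp
  ultimately show ?thesis
    using that[of T \<gamma> h] \<open>T > 0\<close> \<gamma>0 \<gamma>T by auto
qed

text \<open>With the new time \<open>\<sigma> = \<integral> h\<close> the curve becomes an orbit of the linear flow of J,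
  which closes after time \<open>\<sigma> T \<noteq> 0\<close> at a point off both coordinate planes.\<close>
lemma rational_ratio_if_reparametrised_J_orbit_closes:
  fixes \<gamma> :: "real \<Rightarrow> R4" and h :: "real \<Rightarrow> real"
  assumes "T > 0" "p \<noteq> 0"
    and \<gamma>': "\<And>t. t \<in> {0..T} \<Longrightarrow> (\<gamma> has_vector_derivative h t *\<^sub>R J p q (\<gamma> t)) (at t)"
    and h: "continuous_on {0..T} h" "\<And>t. t \<in> {0..T} \<Longrightarrow> h t \<noteq> 0"
    and closed: "\<gamma> T = \<gamma> 0" and \<gamma>0: "\<gamma> 0 = (x, y, z, w)" "(x, y) \<noteq> 0" "(z, w) \<noteq> 0"
  shows "q / p \<in> \<rat>"
proof -
  define \<sigma> where "\<sigma> t = integral {0..t} h" for t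
  have \<sigma>_within: "(\<sigma> has_real_derivative h t) (at t within {0..T})" if "t \<in> {0..T}" for t
    unfolding \<sigma>_def[abs_def] has_real_derivative_iff_has_vector_derivative
    by (rule integral_has_vector_derivative[OF h(1) that])
  have \<sigma>': "(\<sigma> has_real_derivative h t) (at t)" if "t \<in> {0<..<T}" for t
  proof -
    have "t \<in> {0..T}" "at t within {0..T} = at t"
      using that by (auto intro: at_within_Icc_at)
    then show ?thesis
      using \<sigma>_within[of t] by simp
  qed
  have \<sigma>_cont: "continuous_on {0..T} \<sigma>"
    unfolding continuous_on_eq_continuous_within using \<sigma>_within by (blast intro: DERIV_continuous)
  have "\<sigma> differentiable (at t)" if "0 < t" "t < T" for t
    using \<sigma>'[of t] that by (auto simp: real_differentiable_def)
  then obtain l s where s: "0 < s" "s < T" and l: "(\<sigma> has_real_derivative l) (at s)"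
    and mvt: "\<sigma> T - \<sigma> 0 = (T - 0) * l"
    using MVT[OF \<open>T > 0\<close> \<sigma>_cont] by blast
  have "l = h s"
    using DERIV_unique[OF l \<sigma>'[of s]] s by simp
  then have "\<sigma> T = T * h s"
    using mvt by (simp add: \<sigma>_def)
  then have "\<sigma> T \<noteq> 0"
    using h(2)[of s] s \<open>T > 0\<close> by simp
  have \<gamma>_cont: "continuous_on {0..T} \<gamma>"
    using \<gamma>' by (intro continuous_at_imp_continuous_on ballI has_vector_derivative_continuous) blast
  have components: "((\<lambda>t. fst (\<gamma> t)) has_real_derivative h t * (- p * fst (snd (\<gamma> t)))) (at t)"
    "((\<lambda>t. fst (snd (\<gamma> t))) has_real_derivative h t * (p * fst (\<gamma> t))) (at t)"
    "((\<lambda>t. fst (snd (snd (\<gamma> t)))) has_real_derivative h t * (- q * snd (snd (snd (\<gamma> t))))) (at t)"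
    "((\<lambda>t. snd (snd (snd (\<gamma> t)))) has_real_derivative h t * (q * fst (snd (snd (\<gamma> t))))) (at t)"
    if "t \<in> {0<..<T}" for t
    using that has_vector_derivative_fst[OF \<gamma>'] has_vector_derivative_snd[OF \<gamma>']
      has_vector_derivative_fst[OF has_vector_derivative_snd[OF \<gamma>']]
      has_vector_derivative_fst[OF has_vector_derivative_snd[OF has_vector_derivative_snd[OF \<gamma>']]]
      has_vector_derivative_snd[OF has_vector_derivative_snd[OF has_vector_derivative_snd[OF \<gamma>']]]
    by (simp_all add: has_real_derivative_iff_has_vector_derivative J_components)
  have "\<sigma> 0 = 0"
    by (simp add: \<sigma>_def)
  have "cos (p * \<sigma> T) = 1"
    by (rule planar_rotation_closed_orbit[OF \<open>T > 0\<close> components(1,2) \<sigma>' _ _ \<sigma>_cont \<open>\<sigma> 0 = 0\<close>])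
      (use \<gamma>_cont closed \<gamma>0 in \<open>auto intro!: continuous_intros simp: zero_prod_def\<close>)
  moreover have "cos (q * \<sigma> T) = 1"
    by (rule planar_rotation_closed_orbit[OF \<open>T > 0\<close> components(3,4) \<sigma>' _ _ \<sigma>_cont \<open>\<sigma> 0 = 0\<close>])
      (use \<gamma>_cont closed \<gamma>0 in \<open>auto intro!: continuous_intros simp: zero_prod_def\<close>)
  ultimately show ?thesis
    using rational_ratio_if_cos_eq_one \<open>p \<noteq> 0\<close> \<open>\<sigma> T \<noteq> 0\<close> by blast
qed

lemma rational_ratio_if_S1_zonal_flow:
  assumes a: "a > 0" and pq: "p \<noteq> 0" "q \<noteq> 0" and f: "smooth_fun a f"
    and Z: "S1_zonal_flow a (\<lambda>v. f v *\<^sub>R J p q v)" and nonzero: "\<exists>v\<in>M a. f v *\<^sub>R J p q v \<noteq> 0"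
  shows "q / p \<in> \<rat>"
proof -
  obtain f' X where f': "smooth_fun a f'" and eq: "\<forall>w\<in>M a. f w *\<^sub>R J p q w = f' w *\<^sub>R X w"
    and X: "S1_generator a X"
    using Z unfolding S1_zonal_flow_def by auto
  have Z_smooth: "smooth_fun a (\<lambda>v. f v *\<^sub>R J p q v)"
    and div_Z: "\<forall>v\<in>M a. divergence a (\<lambda>v. f v *\<^sub>R J p q v) v = 0"
    using Z by (simp_all add: S1_zonal_flow_def zonal_flow_def vector_field_def)
  then have Jf: "\<forall>w\<in>M a. frechet_derivative (ext a f) (at w) (J p q w) = 0"
    using divergence_scaleR_J[OF a f Z_smooth, of p q] by simp
  obtain v where "v \<in> M a" "f v \<noteq> 0"
    using nonzero by auto
  then obtain x y z w where v0: "(x,y,z,w) \<in> M a" "f (x,y,z,w) \<noteq> 0" "(x,y) \<noteq> 0" "(z,w) \<noteq> 0"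
    using smooth_fun_nonzero_off_axes[OF a f] by metis
  obtain \<gamma> T h where "T > 0" "\<gamma> 0 = (x,y,z,w)" "\<gamma> T = (x,y,z,w)"
    "\<And>t. t \<in> {0..T} \<Longrightarrow> (\<gamma> has_vector_derivative h t *\<^sub>R J p q (\<gamma> t)) (at t)"
    "continuous_on {0..T} h" "\<And>t. t \<in> {0..T} \<Longrightarrow> h t \<noteq> 0"
    using S1_orbit_reparametrises_J[OF a pq f f' Jf eq X v0(1,2)] by metis
  then show ?thesis
    using rational_ratio_if_reparametrised_J_orbit_closes[OF _ pq(1)] v0(3,4) by metis
qed

theorem proposition5p5:
  fixes a p q :: real and f :: "R4 \<Rightarrow> real"
  assumes "a > 0"
    and "p \<noteq> 0 \<or> q \<noteq> 0"
    and "smooth_fun a f"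
    and "zonal_flow a (\<lambda>v. f v *\<^sub>R (p *\<^sub>R dxi v + q *\<^sub>R dmu v))"
    and "\<exists>v\<in>M a. f v *\<^sub>R (p *\<^sub>R dxi v + q *\<^sub>R dmu v) \<noteq> 0"
  shows "S1_zonal_flow a (\<lambda>v. f v *\<^sub>R (p *\<^sub>R dxi v + q *\<^sub>R dmu v))
         \<longleftrightarrow> p = 0 \<or> q / p \<in> \<rat>"
proof -
  have Z_eq: "(\<lambda>v. f v *\<^sub>R (p *\<^sub>R dxi v + q *\<^sub>R dmu v)) = (\<lambda>v. f v *\<^sub>R J p q v)"
    by (simp add: J_def)
  have "S1_zonal_flow a (\<lambda>v. f v *\<^sub>R J p q v)" if "p = 0 \<or> q / p \<in> \<rat>"
    using assms(1,3,4) killing_J S1_generator_J[OF assms(2) that]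
    unfolding S1_zonal_flow_def Z_eq by blast
  moreover have "p = 0 \<or> q / p \<in> \<rat>" if "S1_zonal_flow a (\<lambda>v. f v *\<^sub>R J p q v)"
  proof (cases "p = 0 \<or> q = 0")
    case False
    then show ?thesis
      using rational_ratio_if_S1_zonal_flow[OF assms(1) _ _ assms(3) that] assms(5)[folded J_def]
      by simp
  qed auto
  ultimately show ?thesis
    unfolding Z_eq by blast
qed

end
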